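(* Let $G$ be a group generated by the conjugacy class $x^G$ of an element $x\in G$, and assume that the conjugation action of $x$ on $x^G$ (the permutation $y\mapsto xyx^{-1}$) has finite order $m$. Then for every $r\in\mathbb{N}$ with $\gcd(r,m)=1$, the conjugacy class $(x^r)^G$ of $x^r$ has the same cardinality as $x^G$. *)

theory Defs
  imports "HOL-Algebra.Algebra" "HOL-Library.Equipollence"
begin

definition conj_class :: "('a, 'b) monoid_scheme \<Rightarrow> 'a \<Rightarrow> 'a set" where
  "conj_class G x = {g \<otimes>\<^bsub>G\<^esub> x \<otimes>\<^bsub>G\<^esub> inv\<^bsub>G\<^esub> g | g. g \<in> carrier G}"

definition conj_by :: "('a, 'b) monoid_scheme \<Rightarrow> 'a \<Rightarrow> 'a \<Rightarrow> 'a" where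
  "conj_by G x = (\<lambda>y. x \<otimes>\<^bsub>G\<^esub> y \<otimes>\<^bsub>G\<^esub> inv\<^bsub>G\<^esub> x)"

definition conj_action_order :: "('a, 'b) monoid_scheme \<Rightarrow> 'a \<Rightarrow> nat \<Rightarrow> bool" where
  "conj_action_order G x m \<longleftrightarrow>
     0 < m \<and> (\<forall>y \<in> conj_class G x. (conj_by G x ^^ m) y = y) \<and>
     (\<forall>k. 0 < k \<and> k < m \<longrightarrow> (\<exists>y \<in> conj_class G x. (conj_by G x ^^ k) y \<noteq> y))"

end

theory Submission
  imports Defs
begin

text \<open>Since \<open>x^m\<close> acts trivially on \<open>x^G\<close> and \<open>x^G\<close> generates \<open>G\<close>, the element \<open>x^m\<close> is
  central. Write \<open>a r + b m = 1\<close> with integers \<open>a, b\<close> (integer exponents also cover \<open>r = 0\<close>, \<open>m = 1\<close>).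
  Then every conjugate \<open>y\<close> of \<open>x\<close> satisfies \<open>(y^r)^a = y z\<close> with the central element
  \<open>z = (x^m)^(-b)\<close>, so \<open>y \<mapsto> y^r\<close> is injective on \<open>x^G\<close>; it maps \<open>x^G\<close> onto \<open>(x^r)^G\<close>
  because conjugation commutes with powers.\<close>

definition centralizer :: "('a, 'b) monoid_scheme \<Rightarrow> 'a set \<Rightarrow> 'a set" where
  "centralizer G S = {c \<in> carrier G. \<forall>s \<in> S. c \<otimes>\<^bsub>G\<^esub> s = s \<otimes>\<^bsub>G\<^esub> c}"

lemma (in group) subgroup_centralizer:
  assumes "S \<subseteq> carrier G"
  shows "subgroup (centralizer G S) G"
proof
  show "centralizer G S \<subseteq> carrier G" "\<one> \<in> centralizer G S"
    using assms by (auto simp: centralizer_def)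
next
  fix a b assume "a \<in> centralizer G S" "b \<in> centralizer G S"
  then show "a \<otimes> b \<in> centralizer G S"
    using assms by (auto simp: centralizer_def subset_iff) (metis m_assoc)
next
  fix a assume a: "a \<in> centralizer G S"
  have "inv a \<otimes> s = s \<otimes> inv a" if "s \<in> S" for s
  proof -
    have "a \<in> carrier G" "s \<in> carrier G" "a \<otimes> s = s \<otimes> a"
      using a that assms by (auto simp: centralizer_def)
    then show ?thesis
      by (metis inv_closed inv_solve_left inv_solve_right m_assoc m_closed)
  qed
  then show "inv a \<in> centralizer G S"
    using a by (auto simp: centralizer_def)
qed

lemma (in group) centralizer_generate:
  assumes "S \<subseteq> carrier G"
  shows "centralizer G (generate G S) = centralizer G S"
proof
  show "centralizer G (generate G S) \<subseteq> centralizer G S"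
    using generate.incl[of _ S G] by (auto simp: centralizer_def)
next
  show "centralizer G S \<subseteq> centralizer G (generate G S)"
  proof
    fix c assume c: "c \<in> centralizer G S"
    then have "S \<subseteq> centralizer G {c}"
      using assms by (auto simp: centralizer_def)
    then have "generate G S \<subseteq> centralizer G {c}"
      using c by (intro generate_subgroup_incl subgroup_centralizer) (auto simp: centralizer_def)
    then show "c \<in> centralizer G (generate G S)"
      using c by (auto simp: centralizer_def)
  qed
qed

lemma (in group) conj_by_hom:
  assumes "g \<in> carrier G"
  shows "conj_by G g \<in> hom G G"
proof (rule homI)
  fix a b assume "a \<in> carrier G" "b \<in> carrier G"
  with assms show "conj_by G g (a \<otimes> b) = conj_by G g a \<otimes> conj_by G g b"
    by (simp add: conj_by_def m_assoc) (simp add: m_assoc[symmetric])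
qed (use assms in \<open>simp add: conj_by_def\<close>)

lemma (in group) conj_by_nat_pow:
  "\<lbrakk>g \<in> carrier G; y \<in> carrier G\<rbrakk> \<Longrightarrow> conj_by G g (y [^] (n::nat)) = conj_by G g y [^] n"
  using hom_nat_pow[OF conj_by_hom] is_group by blast

lemma (in group) conj_by_int_pow:
  "\<lbrakk>g \<in> carrier G; y \<in> carrier G\<rbrakk> \<Longrightarrow> conj_by G g (y [^] (i::int)) = conj_by G g y [^] i"
  using hom_int_pow[OF conj_by_hom] is_group by blast

lemma (in group) conj_by_mult:
  "\<lbrakk>a \<in> carrier G; b \<in> carrier G; y \<in> carrier G\<rbrakk>
    \<Longrightarrow> conj_by G a (conj_by G b y) = conj_by G (a \<otimes> b) y"
  by (simp add: conj_by_def m_assoc inv_mult_group)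

lemma (in group) funpow_conj_by:
  "\<lbrakk>x \<in> carrier G; y \<in> carrier G\<rbrakk> \<Longrightarrow> (conj_by G x ^^ n) y = conj_by G (x [^] n) y"
proof (induction n)
  case (Suc n)
  then have "(conj_by G x ^^ Suc n) y = conj_by G (x \<otimes> x [^] n) y"
    by (simp add: conj_by_mult)
  then show ?case
    using Suc.prems by (simp only: nat_pow_Suc2)
qed (simp add: conj_by_def)

lemma (in group) conj_by_eq_iff_commute:
  "\<lbrakk>c \<in> carrier G; y \<in> carrier G\<rbrakk> \<Longrightarrow> conj_by G c y = y \<longleftrightarrow> c \<otimes> y = y \<otimes> c"
  unfolding conj_by_def by (metis inv_closed inv_solve_right m_closed)

lemma (in group) conj_by_central:
  "\<lbrakk>g \<in> carrier G; z \<in> centralizer G (carrier G)\<rbrakk> \<Longrightarrow> conj_by G g z = z"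
  by (simp add: centralizer_def conj_by_eq_iff_commute)

lemma conj_class_eq_image: "conj_class G x = (\<lambda>g. conj_by G g x) ` carrier G"
  by (auto simp: conj_class_def conj_by_def)

lemma (in group) conj_class_subset_carrier: "x \<in> carrier G \<Longrightarrow> conj_class G x \<subseteq> carrier G"
  by (auto simp: conj_class_eq_image conj_by_def)

lemma (in group) nat_pow_in_centralizer_conj_class:
  assumes x: "x \<in> carrier G" and fixed: "\<forall>y \<in> conj_class G x. (conj_by G x ^^ n) y = y"
  shows "x [^] n \<in> centralizer G (conj_class G x)"
proof -
  have "x [^] n \<otimes> y = y \<otimes> x [^] n" if y: "y \<in> conj_class G x" for y
  proof -
    have yc: "y \<in> carrier G"
      using conj_class_subset_carrier[OF x] y by blast
    have "conj_by G (x [^] n) y = y"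
      using fixed y funpow_conj_by[OF x yc] by metis
    then show ?thesis
      using x yc by (simp add: conj_by_eq_iff_commute)
  qed
  then show ?thesis
    using x by (simp add: centralizer_def)
qed

lemma (in group) bij_betw_nat_pow_conj_class:
  assumes x: "x \<in> carrier G" and z: "z \<in> centralizer G (carrier G)"
    and pow_eq: "x [^] (int r * s) = x \<otimes> z"
  shows "bij_betw (\<lambda>y. y [^] r) (conj_class G x) (conj_class G (x [^] r))"
proof (rule bij_betw_imageI)
  have zc: "z \<in> carrier G"
    using z by (simp add: centralizer_def)
  have undo_pow: "(y [^] r) [^] s = y \<otimes> z" if "y \<in> conj_class G x" for y
  proof -
    obtain g where g: "g \<in> carrier G" and y: "y = conj_by G g x"
      using \<open>y \<in> conj_class G x\<close> by (auto simp: conj_class_eq_image)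
    have "conj_by G g x \<in> carrier G"
      using g x by (simp add: conj_by_def)
    then have "(y [^] r) [^] s = conj_by G g (x [^] (int r * s))"
      using g x by (simp add: y conj_by_int_pow int_pow_pow flip: int_pow_int)
    also have "\<dots> = conj_by G g x \<otimes> conj_by G g z"
      using g x zc by (simp add: pow_eq hom_mult[OF conj_by_hom])
    also have "\<dots> = y \<otimes> z"
      by (simp add: y conj_by_central[OF g z])
    finally show ?thesis .
  qed
  show "inj_on (\<lambda>y. y [^] r) (conj_class G x)"
  proof (rule inj_onI)
    fix y w assume y: "y \<in> conj_class G x" and w: "w \<in> conj_class G x" and "y [^] r = w [^] r"
    then have "y \<otimes> z = w \<otimes> z"
      by (metis undo_pow)
    moreover have "y \<in> carrier G" "w \<in> carrier G"
      using y w conj_class_subset_carrier[OF x] by blast+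
    ultimately show "y = w"
      using zc by simp
  qed
  show "(\<lambda>y. y [^] r) ` conj_class G x = conj_class G (x [^] r)"
    using x by (simp add: conj_class_eq_image image_image conj_by_nat_pow)
qed

theorem mainTheorem6:
  fixes G (structure) and x :: 'a and m r :: nat
  assumes "group G"
    and "x \<in> carrier G"
    and "generate G (conj_class G x) = carrier G"
    and "conj_action_order G x m"
    and "coprime r m"
  shows "conj_class G (x [^] r) \<approx> conj_class G x"
proof -
  interpret group G by fact
  have "x [^] m \<in> centralizer G (conj_class G x)"
    using assms(2,4) by (intro nat_pow_in_centralizer_conj_class) (auto simp: conj_action_order_def)
  then have central: "x [^] m \<in> centralizer G (carrier G)"
    using centralizer_generate[OF conj_class_subset_carrier] assms(2,3) by metis
  obtain a b :: int where bezout: "a * int r + b * int m = 1"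
    using bezout_int[of "int r" "int m"] assms(5) by (auto simp: coprime_int_iff gcd_int_int_eq)
  have "int r * a = 1 + int m * - b"
    using bezout by (simp add: algebra_simps)
  then have pow_eq: "x [^] (int r * a) = x \<otimes> (x [^] m) [^] (- b)"
    using assms(2) by (simp add: int_pow_diff int_pow_neg int_pow_pow flip: int_pow_int)
  have "bij_betw (\<lambda>y. y [^] r) (conj_class G x) (conj_class G (x [^] r))"
    using bij_betw_nat_pow_conj_class[OF assms(2) _ pow_eq]
      subgroup_int_pow_closed[OF subgroup_centralizer[OF subset_refl] central] by blast
  then show ?thesis
    unfolding eqpoll_def by (blast intro: bij_betw_inv_into)
qed

end
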